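(* Assume the root datum is $X$-regular and $\phi$ is an enhancer. Let $\lambda,\lambda'\in X^+$, $\Lambda_\lambda=\{\lambda-\nu':\nu\in\mathbb N[I]\}$ and $V_{\lambda'}=\{\nu'-\lambda':\nu\in\mathbb N[I]\}$, and for $\zeta=\lambda-\nu'\in\Lambda_\lambda$ set $p(\zeta)=p(\nu)$. Then there is a function $\varkappa=\varkappa_{\lambda,\lambda'}:\Lambda_\lambda\times V_{\lambda'}\to\mathbb Z$ such that, modulo $4$ and for all $i\in I$, $\zeta\in\Lambda_\lambda$, $\zeta'\in V_{\lambda'}$ (with $\zeta-i'\in\Lambda_\lambda$, $\zeta'+i'\in V_{\lambda'}$ automatically): (1) $\varkappa(\zeta-i',\zeta')\equiv\varkappa(\zeta,\zeta')-\phi(i,\zeta')$; (2) $\varkappa(\zeta,\zeta'+i')\equiv\varkappa(\zeta,\zeta')+\phi(i,\zeta)+2d_i+\langle\tilde i,\zeta+\zeta'\rangle+2p(\zeta)p(i)$; (3) $\varkappa(\lambda,-\lambda')\equiv0$.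
   Context: Setup. $I$ is a finite set with a partition $I=I_{\bar 0}\sqcup I_{\bar 1}$, $I_{\bar 1}\neq\emptyset$; $p(i)=0$ for $i\in I_{\bar0}$ and $p(i)=1$ for $i\in I_{\bar1}$. There is a symmetric $\mathbb Z$-bilinear form $\nu\cdot\nu'$ on $\mathbb Z[I]$ with $d_i:=\frac{i\cdot i}{2}\in\mathbb Z_{>0}$, $a_{ij}:=\frac{2\,i\cdot j}{i\cdot i}\in\mathbb Z_{\le 0}$ for $i\neq j$, $a_{ij}\in2\mathbb Z$ whenever $i\in I_{\bar1}$, and $d_i\equiv p(i)\pmod 2$ (hence $i\cdot j\in2\mathbb Z$). A root datum is fixed: free abelian groups $X,Y$ of finite rank with a perfect pairing $\langle\cdot,\cdot\rangle:Y\times X\to\mathbb Z$, a map $I\to Y$, $i\mapsto i$, with linearly independent image, and a map $I\to X$, $i\mapsto i'$, with $\langle i,j'\rangle=\frac{2\,i\cdot j}{i\cdot i}$. $X$-regular means the image of $i\mapsto i'$ is linearly independent. For $\nu=\sum\nu_i i\in\mathbb Z[I]$: $p(\nu)=\sum\nu_ip(i)\in\mathbb Z/2$ (identified with $\{0,1\}$ in exponents), $\tilde\nu=\sum d_i\nu_ii\in Y$, $\nu'=\sum\nu_ii'\in X$; $\tilde i=d_ii$. $X^+=\{\lambda\in X:\langle i,\lambda\rangle\ge0\ \forall i\}$. An enhancer is a function $\phi:\mathbb Z[I]\times X\to\mathbb Z$ such that, with $\equiv$ denoting congruence mod 4: (a) $\phi(\nu,\lambda+\mu')\equiv\phi(\nu,\mu')+\phi(\nu,\lambda)$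 and $\phi(\nu+\mu,\lambda)\equiv\phi(\nu,\lambda)+\phi(\mu,\lambda)$ for $\nu,\mu\in\mathbb Z[I]$, $\lambda\in X$; (b) $\phi(i,j')\in2\mathbb Z$ for $i\neq j$; (c) $\phi(i,j')-\phi(j,i')\equiv i\cdot j+2p(i)p(j)$ for $i\ne j$ and $\phi(i,i')\equiv d_i$. *)

theory Defs
  imports "HOL-Analysis.Finite_Cartesian_Product"
begin

text \<open>Elements of Z[I] are integer functions on 'i supported in I; the basis
  element i is the indicator function basis i.  X and Y are free abelian groups of
  finite rank, realised as int ^ 'n with the standard (perfect) pairing.\<close>

definition ZI :: "'i set \<Rightarrow> ('i \<Rightarrow> int) set" where
  "ZI I = {\<nu>. \<forall>k. k \<notin> I \<longrightarrow> \<nu> k = 0}"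

definition NI :: "'i set \<Rightarrow> ('i \<Rightarrow> int) set" where
  "NI I = {\<nu> \<in> ZI I. \<forall>k. 0 \<le> \<nu> k}"

definition basis :: "'i \<Rightarrow> 'i \<Rightarrow> int" where
  "basis i = (\<lambda>k. if k = i then 1 else 0)"

definition pairing :: "int ^ 'n \<Rightarrow> int ^ 'n \<Rightarrow> int" where
  "pairing y x = (\<Sum>k\<in>UNIV. y $ k * x $ k)"

definition par :: "'i set \<Rightarrow> 'i \<Rightarrow> int" where
  "par I1 i = (if i \<in> I1 then 1 else 0)"

definition parZ :: "'i set \<Rightarrow> 'i set \<Rightarrow> ('i \<Rightarrow> int) \<Rightarrow> int" where
  "parZ I I1 \<nu> = (\<Sum>k\<in>I. \<nu> k * par I1 k) mod 2"

definition dd :: "('i \<Rightarrow> 'i \<Rightarrow> int) \<Rightarrow> 'i \<Rightarrow> int" where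
  "dd dot i = dot i i div 2"

definition cartan_datum :: "'i set \<Rightarrow> 'i set \<Rightarrow> ('i \<Rightarrow> 'i \<Rightarrow> int) \<Rightarrow> bool" where
  "cartan_datum I I1 dot \<longleftrightarrow>
     finite I \<and> I1 \<subseteq> I \<and> I1 \<noteq> {} \<and>
     (\<forall>i\<in>I. \<forall>j\<in>I. dot i j = dot j i) \<and>
     (\<forall>i\<in>I. even (dot i i) \<and> dot i i > 0) \<and>
     (\<forall>i\<in>I. \<forall>j\<in>I. i \<noteq> j \<longrightarrow> dot i i dvd 2 * dot i j \<and> dot i j \<le> 0) \<and>
     (\<forall>i\<in>I1. \<forall>j\<in>I. i \<noteq> j \<longrightarrow> even (2 * dot i j div dot i i)) \<and>
     (\<forall>i\<in>I. dd dot i mod 2 = par I1 i)"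

definition lin_indep_fam :: "'i set \<Rightarrow> ('i \<Rightarrow> int ^ 'n) \<Rightarrow> bool" where
  "lin_indep_fam I v \<longleftrightarrow>
     (\<forall>c. (\<Sum>i\<in>I. c i *s v i) = 0 \<longrightarrow> (\<forall>i\<in>I. c i = 0))"

text \<open>Root datum: i \<mapsto> i in Y (linearly independent), i \<mapsto> i' in X,
  with <i, j'> = 2 i.j / i.i.\<close>
definition root_datum :: "'i set \<Rightarrow> ('i \<Rightarrow> 'i \<Rightarrow> int) \<Rightarrow> ('i \<Rightarrow> int ^ 'n) \<Rightarrow> ('i \<Rightarrow> int ^ 'n) \<Rightarrow> bool" where
  "root_datum I dot iY iX \<longleftrightarrow>
     lin_indep_fam I iY \<and>
     (\<forall>i\<in>I. \<forall>j\<in>I. pairing (iY i) (iX j) * dot i i = 2 * dot i j)"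

definition X_regular :: "'i set \<Rightarrow> ('i \<Rightarrow> int ^ 'n) \<Rightarrow> bool" where
  "X_regular I iX \<longleftrightarrow> lin_indep_fam I iX"

definition primeX :: "'i set \<Rightarrow> ('i \<Rightarrow> int ^ 'n) \<Rightarrow> ('i \<Rightarrow> int) \<Rightarrow> int ^ 'n" where
  "primeX I iX \<nu> = (\<Sum>i\<in>I. \<nu> i *s iX i)"

definition tildeY :: "('i \<Rightarrow> 'i \<Rightarrow> int) \<Rightarrow> ('i \<Rightarrow> int ^ 'n) \<Rightarrow> 'i \<Rightarrow> int ^ 'n" where
  "tildeY dot iY i = dd dot i *s iY i"

definition Xplus :: "'i set \<Rightarrow> ('i \<Rightarrow> int ^ 'n) \<Rightarrow> (int ^ 'n) set" where
  "Xplus I iY = {x. \<forall>i\<in>I. pairing (iY i) x \<ge> 0}"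

definition enhancer :: "'i set \<Rightarrow> 'i set \<Rightarrow> ('i \<Rightarrow> 'i \<Rightarrow> int) \<Rightarrow> ('i \<Rightarrow> int ^ 'n)
    \<Rightarrow> (('i \<Rightarrow> int) \<Rightarrow> int ^ 'n \<Rightarrow> int) \<Rightarrow> bool" where
  "enhancer I I1 dot iX \<phi> \<longleftrightarrow>
     (\<forall>\<nu>\<in>ZI I. \<forall>\<mu>\<in>ZI I. \<forall>x.
        \<phi> \<nu> (x + primeX I iX \<mu>) mod 4 = (\<phi> \<nu> (primeX I iX \<mu>) + \<phi> \<nu> x) mod 4 \<and>
        \<phi> (\<lambda>k. \<nu> k + \<mu> k) x mod 4 = (\<phi> \<nu> x + \<phi> \<mu> x) mod 4) \<and>
     (\<forall>i\<in>I. \<forall>j\<in>I. i \<noteq> j \<longrightarrow> even (\<phi> (basis i) (iX j))) \<and>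
     (\<forall>i\<in>I. \<forall>j\<in>I. i \<noteq> j \<longrightarrow>
        (\<phi> (basis i) (iX j) - \<phi> (basis j) (iX i)) mod 4
          = (dot i j + 2 * par I1 i * par I1 j) mod 4) \<and>
     (\<forall>i\<in>I. \<phi> (basis i) (iX i) mod 4 = dd dot i mod 4)"

end

theory Submission
  imports Defs "HOL-Number_Theory.Cong"
begin

text \<open>By X-regularity, \<zeta> = \<lambda> - \<nu>' and \<zeta>' = \<mu>' - \<lambda>' determine \<nu>, \<mu> \<in> \<nat>[I], so \<kappa> may be
  given in these coordinates as
  \<kappa>(\<lambda> - \<nu>', \<mu>' - \<lambda>') = \<phi>(\<mu>, \<lambda>) - \<phi>(\<nu>, \<mu>' - \<lambda>') + \<mu>\<cdot>\<mu>/2 + \<Sum>_j \<mu>_j (d_j + \<langle>j\<tilde>, \<lambda> - \<lambda>'\<rangle>).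
  Property (1) is additivity of \<phi> in its first argument. For (2), the quadratic term produces
  \<mu>\<cdot>i + d_i and \<phi>(i, \<lambda>) splits as \<phi>(i, \<lambda> - \<nu>') + \<phi>(i, \<nu>'); what remains is the twisted symmetry
  \<phi>(i, \<nu>') - \<phi>(\<nu>, i') \<equiv> \<nu>\<cdot>i + 2p(\<nu>)p(i), obtained from enhancer condition (c) by expanding both sides
  bilinearly, together with \<nu>\<cdot>i being even.\<close>

lemma primeX_add: "primeX I iX (\<lambda>k. a k + b k) = primeX I iX a + primeX I iX b"
  by (simp add: primeX_def vector_sadd_rdistrib sum.distrib)

lemma primeX_zero: "primeX I iX (\<lambda>k. 0) = 0"
  by (simp add: primeX_def)

lemma sum_basis_left: "finite I \<Longrightarrow> i \<in> I \<Longrightarrow> (\<Sum>j\<in>I. basis i j * f j) = f i"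
  by (simp add: basis_def if_distrib[where f = "\<lambda>x. x * _"] cong: if_cong)

lemma sum_add_basis:
  "finite I \<Longrightarrow> i \<in> I \<Longrightarrow> (\<Sum>j\<in>I. (\<mu> j + basis i j) * f j) = (\<Sum>j\<in>I. \<mu> j * f j) + f i"
  by (simp add: distrib_right sum.distrib sum_basis_left)

lemma primeX_basis: "finite I \<Longrightarrow> i \<in> I \<Longrightarrow> primeX I iX (basis i) = iX i"
  by (simp add: primeX_def basis_def if_distrib[where f = "\<lambda>x. x *s _"] cong: if_cong)

lemma primeX_add_basis:
  "finite I \<Longrightarrow> i \<in> I \<Longrightarrow> primeX I iX (\<lambda>k. \<nu> k + basis i k) = primeX I iX \<nu> + iX i"
  by (simp add: primeX_add primeX_basis)

lemma inj_on_primeX: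
  assumes "X_regular I iX"
  shows "inj_on (primeX I iX) (ZI I)"
proof (rule inj_onI)
  fix a b assume a: "a \<in> ZI I" and b: "b \<in> ZI I" and eq: "primeX I iX a = primeX I iX b"
  have "(\<Sum>i\<in>I. (a i - b i) *s iX i) = 0"
    using eq by (simp add: primeX_def vector_sub_rdistrib sum_subtractf)
  moreover have "\<forall>c. (\<Sum>i\<in>I. c i *s iX i) = 0 \<longrightarrow> (\<forall>i\<in>I. c i = 0)"
    using assms by (simp add: X_regular_def lin_indep_fam_def)
  ultimately have "\<forall>i\<in>I. a i - b i = 0" by (metis (no_types))
  with a b show "a = b"
    by (auto simp: ZI_def fun_eq_iff)
qed

lemma pairing_add: "pairing y (a + b) = pairing y a + pairing y b"
  by (simp add: pairing_def distrib_left sum.distrib)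

lemma pairing_diff: "pairing y (a - b) = pairing y a - pairing y b"
  by (simp add: pairing_def right_diff_distrib sum_subtractf)

lemma pairing_smult_left: "pairing (c *s y) x = c * pairing y x"
  by (simp add: pairing_def sum_distrib_left mult.assoc)

lemma pairing_primeX: "pairing y (primeX I iX \<nu>) = (\<Sum>j\<in>I. \<nu> j * pairing y (iX j))"
  unfolding pairing_def primeX_def
  by (simp add: sum_distrib_left sum_distrib_right mult_ac sum.swap[of _ UNIV])

lemma ZI_add: "a \<in> ZI I \<Longrightarrow> b \<in> ZI I \<Longrightarrow> (\<lambda>k. a k + b k) \<in> ZI I"
  by (simp add: ZI_def)

lemma ZI_basis: "i \<in> I \<Longrightarrow> basis i \<in> ZI I"
  by (auto simp: ZI_def basis_def)

lemma ZI_zero: "(\<lambda>k. 0) \<in> ZI I"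
  by (simp add: ZI_def)

lemma ZI_scale: "v \<in> ZI I \<Longrightarrow> (\<lambda>k. c * v k) \<in> ZI I"
  by (simp add: ZI_def)

lemma ZI_basis_expansion:
  "finite I \<Longrightarrow> \<nu> \<in> ZI I \<Longrightarrow> (\<lambda>k. \<Sum>j\<in>I. \<nu> j * basis j k) = \<nu>"
  by (auto simp: fun_eq_iff basis_def ZI_def if_distrib[where f = "\<lambda>x. _ * x"] cong: if_cong)

subsection \<open>Functions on \<int>[I] that are additive modulo m\<close>

definition additive_mod :: "int \<Rightarrow> 'i set \<Rightarrow> (('i \<Rightarrow> int) \<Rightarrow> int) \<Rightarrow> bool" where
  "additive_mod m I g \<longleftrightarrow> (\<forall>a\<in>ZI I. \<forall>b\<in>ZI I. [g (\<lambda>k. a k + b k) = g a + g b] (mod m))"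

lemma additive_modD:
  "additive_mod m I g \<Longrightarrow> a \<in> ZI I \<Longrightarrow> b \<in> ZI I \<Longrightarrow> [g (\<lambda>k. a k + b k) = g a + g b] (mod m)"
  by (simp add: additive_mod_def)

lemma additive_mod_zero:
  assumes "additive_mod m I g"
  shows "[g (\<lambda>k. 0) = 0] (mod m)"
  using additive_modD[OF assms ZI_zero ZI_zero] by (simp add: cong_iff_dvd_diff)

lemma additive_mod_scale:
  assumes g: "additive_mod m I g" and v: "v \<in> ZI I"
  shows "[g (\<lambda>k. c * v k) = c * g v] (mod m)"
proof (induction c rule: int_induct[where k = 0])
  case base
  then show ?case using additive_mod_zero[OF g] by simp
next
  case (step1 c)
  have "[g (\<lambda>k. c * v k + v k) = g (\<lambda>k. c * v k) + g v] (mod m)"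
    using additive_modD[OF g ZI_scale[OF v] v] .
  also have "[g (\<lambda>k. c * v k) + g v = c * g v + g v] (mod m)"
    using step1.IH by (rule cong_add) simp
  finally show ?case by (simp add: algebra_simps)
next
  case (step2 c)
  have "(\<lambda>k. (c - 1) * v k + v k) = (\<lambda>k. c * v k)" by (simp add: algebra_simps)
  then have "[g (\<lambda>k. c * v k) = g (\<lambda>k. (c - 1) * v k) + g v] (mod m)"
    using additive_modD[OF g ZI_scale[OF v] v, of "c - 1"] by simp
  then have "[g (\<lambda>k. (c - 1) * v k) + g v = c * g v] (mod m)"
    using step2.IH by (metis cong_sym cong_trans)
  from cong_diff[OF this cong_refl[of "g v"]] show ?case by (simp add: algebra_simps)
qed

lemma additive_mod_basis_expansion:
  assumes fin: "finite I" and g: "additive_mod m I g" and \<nu>: "\<nu> \<in> ZI I"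
  shows "[g \<nu> = (\<Sum>j\<in>I. \<nu> j * g (basis j))] (mod m)"
proof -
  have "[g (\<lambda>k. \<Sum>j\<in>S. \<nu> j * basis j k) = (\<Sum>j\<in>S. \<nu> j * g (basis j))] (mod m)"
    if "finite S" "S \<subseteq> I" for S
    using that
  proof (induction S rule: finite_induct)
    case empty
    then show ?case using additive_mod_zero[OF g] by simp
  next
    case (insert x S)
    have x: "x \<in> I" and S: "S \<subseteq> I" using insert.prems by auto
    have partial: "(\<lambda>k. \<Sum>j\<in>S. \<nu> j * basis j k) \<in> ZI I"
      using S by (auto simp: ZI_def basis_def intro!: sum.neutral)
    have "[g (\<lambda>k. (\<Sum>j\<in>S. \<nu> j * basis j k) + \<nu> x * basis x k)
        = g (\<lambda>k. \<Sum>j\<in>S. \<nu> j * basis j k) + g (\<lambda>k. \<nu> x * basis x k)] (mod m)"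
      using additive_modD[OF g partial ZI_scale[OF ZI_basis[OF x]]] .
    also have "[g (\<lambda>k. \<Sum>j\<in>S. \<nu> j * basis j k) + g (\<lambda>k. \<nu> x * basis x k)
        = (\<Sum>j\<in>S. \<nu> j * g (basis j)) + \<nu> x * g (basis x)] (mod m)"
      using insert.IH[OF S] additive_mod_scale[OF g ZI_basis[OF x]] by (rule cong_add)
    finally show ?case using insert.hyps by (simp add: add.commute)
  qed
  then show ?thesis using ZI_basis_expansion[OF fin \<nu>] fin by force
qed

definition quad_form :: "'i set \<Rightarrow> ('i \<Rightarrow> 'i \<Rightarrow> int) \<Rightarrow> ('i \<Rightarrow> int) \<Rightarrow> int" where
  "quad_form I h \<mu> = (\<Sum>j\<in>I. \<Sum>k\<in>I. \<mu> j * \<mu> k * h j k)"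

lemma quad_form_add_basis:
  assumes fin: "finite I" and i: "i \<in> I" and sym: "\<And>j k. j \<in> I \<Longrightarrow> k \<in> I \<Longrightarrow> h j k = h k j"
  shows "quad_form I h (\<lambda>k. \<mu> k + basis i k) = quad_form I h \<mu> + 2 * (\<Sum>k\<in>I. \<mu> k * h i k) + h i i"
proof -
  have expand: "(\<mu> j + basis i j) * (\<mu> k + basis i k) * h j k
     = \<mu> j * \<mu> k * h j k + basis i j * (\<mu> k * h j k) + basis i k * (\<mu> j * h j k)
       + basis i j * (basis i k * h j k)" for j k
    by (simp add: algebra_simps)
  have "(\<Sum>j\<in>I. \<Sum>k\<in>I. basis i k * (\<mu> j * h j k)) = (\<Sum>k\<in>I. \<mu> k * h i k)"
    using sym i by (simp add: sum_distrib_left[symmetric] sum_basis_left fin)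
  then show ?thesis
    unfolding quad_form_def expand sum.distrib
    by (simp add: sum_distrib_left[symmetric] sum_basis_left fin i)
qed

subsection \<open>Enhancers\<close>

locale enhanced_root_datum =
  fixes I I1 :: "'i set" and dot :: "'i \<Rightarrow> 'i \<Rightarrow> int"
    and iY iX :: "'i \<Rightarrow> int ^ 'n::finite"
    and \<phi> :: "('i \<Rightarrow> int) \<Rightarrow> int ^ 'n \<Rightarrow> int"
  assumes cartan: "cartan_datum I I1 dot"
    and root: "root_datum I dot iY iX"
    and enhancer: "enhancer I I1 dot iX \<phi>"
begin

lemma finite_I: "finite I"
  using cartan by (simp add: cartan_datum_def)

lemma dot_commute: "i \<in> I \<Longrightarrow> j \<in> I \<Longrightarrow> dot i j = dot j i"
  using cartan unfolding cartan_datum_def by blast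

lemma dot_self_even: "i \<in> I \<Longrightarrow> even (dot i i)"
  using cartan unfolding cartan_datum_def by blast

lemma dot_self_pos: "i \<in> I \<Longrightarrow> dot i i > 0"
  using cartan unfolding cartan_datum_def by blast

lemma dot_self_dvd: "i \<in> I \<Longrightarrow> j \<in> I \<Longrightarrow> i \<noteq> j \<Longrightarrow> dot i i dvd 2 * dot i j"
  using cartan unfolding cartan_datum_def by blast

lemma cartan_entry_even: "i \<in> I1 \<Longrightarrow> j \<in> I \<Longrightarrow> i \<noteq> j \<Longrightarrow> even (2 * dot i j div dot i i)"
  using cartan unfolding cartan_datum_def by blast

lemma dd_mod_2: "i \<in> I \<Longrightarrow> dd dot i mod 2 = par I1 i"
  using cartan unfolding cartan_datum_def by blast

lemma double_dd: "i \<in> I \<Longrightarrow> 2 * dd dot i = dot i i"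
  using dot_self_even by (simp add: dd_def)

lemma dot_even:
  assumes i: "i \<in> I" and j: "j \<in> I"
  shows "even (dot i j)"
proof -
  have off_diagonal_even: "even (dot a b)"
    if a: "a \<in> I" and b: "b \<in> I" and ab: "a \<noteq> b" and "a \<in> I1 \<or> b \<notin> I1" for a b
  proof -
    obtain m where m: "2 * dot a b = dot a a * m"
      using dot_self_dvd[OF a b ab] by blast
    obtain e where e: "dot a a = 2 * e"
      using dot_self_even[OF a] by blast
    show ?thesis
    proof (cases "a \<in> I1")
      case True
      then have "even m"
        using cartan_entry_even[OF True b ab] m dot_self_pos[OF a] by simp
      then show ?thesis using m e by auto
    next
      case False
      then have "even e"
        using dd_mod_2[OF a] e by (simp add: par_def dd_def even_iff_mod_2_eq_zero)
      then show ?thesis using m e by auto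
    qed
  qed
  show ?thesis
  proof (cases "i = j")
    case True
    then show ?thesis using dot_self_even[OF i] by simp
  next
    case False
    then show ?thesis
      using off_diagonal_even[OF i j False] off_diagonal_even[OF j i False[symmetric]] dot_commute[OF i j] by argo
  qed
qed

lemma pairing_tildeY_iX:
  assumes i: "i \<in> I" and j: "j \<in> I"
  shows "pairing (tildeY dot iY i) (iX j) = dot i j"
proof -
  have "pairing (iY i) (iX j) * dot i i = 2 * dot i j"
    using root i j unfolding root_datum_def by blast
  then have "2 * (dd dot i * pairing (iY i) (iX j)) = 2 * dot i j"
    using double_dd[OF i] by (metis mult.assoc mult.commute)
  then show ?thesis by (simp add: tildeY_def pairing_smult_left)
qed

lemma pairing_tildeY_primeX:
  "i \<in> I \<Longrightarrow> pairing (tildeY dot iY i) (primeX I iX \<nu>) = (\<Sum>j\<in>I. \<nu> j * dot i j)"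
  by (simp add: pairing_primeX pairing_tildeY_iX)

lemma phi_add_left:
  "\<nu> \<in> ZI I \<Longrightarrow> \<mu> \<in> ZI I \<Longrightarrow> [\<phi> (\<lambda>k. \<nu> k + \<mu> k) x = \<phi> \<nu> x + \<phi> \<mu> x] (mod 4)"
  using enhancer by (simp add: enhancer_def cong_def)

lemma phi_add_right:
  "\<nu> \<in> ZI I \<Longrightarrow> \<mu> \<in> ZI I \<Longrightarrow> [\<phi> \<nu> (x + primeX I iX \<mu>) = \<phi> \<nu> (primeX I iX \<mu>) + \<phi> \<nu> x] (mod 4)"
  using enhancer by (simp add: enhancer_def cong_def)

lemma phi_zero_left: "[\<phi> (\<lambda>k. 0) x = 0] (mod 4)"
  by (rule additive_mod_zero[of 4 I "\<lambda>\<nu>. \<phi> \<nu> x"]) (simp add: additive_mod_def phi_add_left)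

lemma phi_basis_swap:
  assumes i: "i \<in> I" and j: "j \<in> I"
  shows "[\<phi> (basis i) (iX j) - \<phi> (basis j) (iX i) = dot i j + 2 * par I1 i * par I1 j] (mod 4)"
proof (cases "i = j")
  case False
  have "\<forall>i\<in>I. \<forall>j\<in>I. i \<noteq> j \<longrightarrow>
      (\<phi> (basis i) (iX j) - \<phi> (basis j) (iX i)) mod 4 = (dot i j + 2 * par I1 i * par I1 j) mod 4"
    using enhancer unfolding enhancer_def by (elim conjE)
  then show ?thesis using i j False by (simp add: cong_def)
next
  case True
  have "even (dd dot i + par I1 i)"
    unfolding dd_mod_2[OF i, symmetric]
    by (cases "even (dd dot i)") (auto simp: odd_iff_mod_2_eq_one)
  then obtain k where "dd dot i + par I1 i = 2 * k" ..
  then have "dot i i + 2 * par I1 i * par I1 i = 4 * k"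
    using double_dd[OF i] by (simp add: par_def split: if_splits)
  then have "[0 = dot i i + 2 * par I1 i * par I1 i] (mod 4)"
    by (simp add: cong_def)
  with True show ?thesis by simp
qed

lemma phi_swap:
  assumes i: "i \<in> I" and \<nu>: "\<nu> \<in> ZI I"
  shows "[\<phi> (basis i) (primeX I iX \<nu>) - \<phi> \<nu> (iX i)
          = (\<Sum>j\<in>I. \<nu> j * dot i j) + 2 * parZ I I1 \<nu> * par I1 i] (mod 4)"
proof -
  define S where "S = (\<Sum>j\<in>I. \<nu> j * par I1 j)"
  have "additive_mod 4 I (\<lambda>\<nu>. \<phi> (basis i) (primeX I iX \<nu>))"
    unfolding additive_mod_def
    using phi_add_right[OF ZI_basis[OF i]] by (simp add: primeX_add add.commute)
  from additive_mod_basis_expansion[OF finite_I this \<nu>]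
  have left: "[\<phi> (basis i) (primeX I iX \<nu>) = (\<Sum>j\<in>I. \<nu> j * \<phi> (basis i) (iX j))] (mod 4)"
    by (simp add: primeX_basis finite_I)
  have "additive_mod 4 I (\<lambda>\<nu>. \<phi> \<nu> (iX i))"
    by (simp add: additive_mod_def phi_add_left)
  from additive_mod_basis_expansion[OF finite_I this \<nu>]
  have right: "[\<phi> \<nu> (iX i) = (\<Sum>j\<in>I. \<nu> j * \<phi> (basis j) (iX i))] (mod 4)"
    by simp
  have "[\<phi> (basis i) (primeX I iX \<nu>) - \<phi> \<nu> (iX i)
       = (\<Sum>j\<in>I. \<nu> j * (\<phi> (basis i) (iX j) - \<phi> (basis j) (iX i)))] (mod 4)"
    using cong_diff[OF left right] by (simp add: sum_subtractf right_diff_distrib)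
  also have "[(\<Sum>j\<in>I. \<nu> j * (\<phi> (basis i) (iX j) - \<phi> (basis j) (iX i)))
       = (\<Sum>j\<in>I. \<nu> j * (dot i j + 2 * par I1 i * par I1 j))] (mod 4)"
    by (intro cong_sum cong_scalar_left phi_basis_swap[OF i])
  also have "(\<Sum>j\<in>I. \<nu> j * (dot i j + 2 * par I1 i * par I1 j))
      = (\<Sum>j\<in>I. \<nu> j * dot i j) + 2 * par I1 i * S"
    by (simp add: S_def algebra_simps sum.distrib sum_distrib_left)
  also have "[(\<Sum>j\<in>I. \<nu> j * dot i j) + 2 * par I1 i * S
      = (\<Sum>j\<in>I. \<nu> j * dot i j) + 2 * (S mod 2) * par I1 i] (mod 4)"
  proof -
    have "S - S mod 2 = 2 * (S div 2)"
      by (simp add: minus_mod_eq_mult_div)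
    have "2 * par I1 i * S - 2 * (S mod 2) * par I1 i = 2 * par I1 i * (S - S mod 2)"
      by (simp add: algebra_simps)
    also have "\<dots> = 4 * (par I1 i * (S div 2))"
      unfolding \<open>S - S mod 2 = 2 * (S div 2)\<close> by simp
    finally show ?thesis by (simp add: cong_iff_dvd_diff)
  qed
  finally show ?thesis by (simp add: parZ_def S_def)
qed

lemma phi_basis_minus_phi_iX:
  assumes i: "i \<in> I" and \<nu>: "\<nu> \<in> ZI I"
  shows "[\<phi> (basis i) x - \<phi> \<nu> (iX i)
          = \<phi> (basis i) (x - primeX I iX \<nu>) - (\<Sum>j\<in>I. \<nu> j * dot i j) + 2 * parZ I I1 \<nu> * par I1 i] (mod 4)"
proof -
  let ?\<nu>i = "\<Sum>j\<in>I. \<nu> j * dot i j" and ?p = "2 * parZ I I1 \<nu> * par I1 i"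
  have "[\<phi> (basis i) x - \<phi> \<nu> (iX i)
      = \<phi> (basis i) (x - primeX I iX \<nu>) + (\<phi> (basis i) (primeX I iX \<nu>) - \<phi> \<nu> (iX i))] (mod 4)"
    using phi_add_right[OF ZI_basis[OF i] \<nu>, of "x - primeX I iX \<nu>"]
    by (simp add: cong_iff_dvd_diff algebra_simps)
  also have "[\<phi> (basis i) (x - primeX I iX \<nu>) + (\<phi> (basis i) (primeX I iX \<nu>) - \<phi> \<nu> (iX i))
      = \<phi> (basis i) (x - primeX I iX \<nu>) + (?\<nu>i + ?p)] (mod 4)"
    by (intro cong_add cong_refl phi_swap[OF i \<nu>])
  also have "[\<phi> (basis i) (x - primeX I iX \<nu>) + (?\<nu>i + ?p)
      = \<phi> (basis i) (x - primeX I iX \<nu>) - ?\<nu>i + ?p] (mod 4)"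
  proof -
    have "even ?\<nu>i" using dot_even[OF i] by (auto intro: dvd_sum)
    then show ?thesis by (auto simp: cong_iff_dvd_diff elim!: evenE)
  qed
  finally show ?thesis .
qed

definition kappa_coord :: "int ^ 'n \<Rightarrow> int ^ 'n \<Rightarrow> ('i \<Rightarrow> int) \<Rightarrow> ('i \<Rightarrow> int) \<Rightarrow> int" where
  "kappa_coord lam lam' \<nu> \<mu> = \<phi> \<mu> lam - \<phi> \<nu> (primeX I iX \<mu> - lam')
     + quad_form I (\<lambda>j k. dot j k div 2) \<mu>
     + (\<Sum>j\<in>I. \<mu> j * (dd dot j + pairing (tildeY dot iY j) (lam - lam')))"

lemma quad_form_half_dot_add_basis:
  assumes i: "i \<in> I"
  shows "quad_form I (\<lambda>j k. dot j k div 2) (\<lambda>k. \<mu> k + basis i k)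
       = quad_form I (\<lambda>j k. dot j k div 2) \<mu> + (\<Sum>k\<in>I. \<mu> k * dot i k) + dd dot i"
proof -
  have "2 * (\<Sum>k\<in>I. \<mu> k * (dot i k div 2)) = (\<Sum>k\<in>I. \<mu> k * dot i k)"
    by (simp add: sum_distrib_left) (rule sum.cong, auto simp: dot_even[OF i])
  then show ?thesis
    using quad_form_add_basis[OF finite_I i, of "\<lambda>j k. dot j k div 2" \<mu>] dot_commute
    by (simp add: dd_def)
qed

lemma kappa_coord_add_basis_left:
  assumes "i \<in> I" "\<nu> \<in> ZI I"
  shows "[kappa_coord lam lam' (\<lambda>k. \<nu> k + basis i k) \<mu>
        = kappa_coord lam lam' \<nu> \<mu> - \<phi> (basis i) (primeX I iX \<mu> - lam')] (mod 4)"
  using cong_diff[OF cong_refl phi_add_left[OF assms(2) ZI_basis[OF assms(1)]],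
      of "kappa_coord lam lam' \<nu> \<mu> + \<phi> \<nu> (primeX I iX \<mu> - lam')" "primeX I iX \<mu> - lam'"]
  by (simp add: kappa_coord_def algebra_simps)

lemma kappa_coord_add_basis_right:
  assumes i: "i \<in> I" and \<nu>: "\<nu> \<in> ZI I" and \<mu>: "\<mu> \<in> ZI I"
  shows "[kappa_coord lam lam' \<nu> (\<lambda>k. \<mu> k + basis i k)
        = kappa_coord lam lam' \<nu> \<mu> + \<phi> (basis i) (lam - primeX I iX \<nu>) + 2 * dd dot i
          + pairing (tildeY dot iY i) (lam - primeX I iX \<nu> + (primeX I iX \<mu> - lam'))
          + 2 * parZ I I1 \<nu> * par I1 i] (mod 4)"
proof -
  let ?x = "primeX I iX \<mu> - lam'" and ?\<zeta> = "lam - primeX I iX \<nu>"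
  let ?\<nu>i = "\<Sum>j\<in>I. \<nu> j * dot i j" and ?\<mu>i = "\<Sum>j\<in>I. \<mu> j * dot i j"
  let ?p = "2 * parZ I I1 \<nu> * par I1 i"
  let ?R = "kappa_coord lam lam' \<nu> \<mu> + ?\<mu>i + 2 * dd dot i + pairing (tildeY dot iY i) (lam - lam')"
  have "[kappa_coord lam lam' \<nu> (\<lambda>k. \<mu> k + basis i k)
      = (\<phi> (\<lambda>k. \<mu> k + basis i k) lam - \<phi> \<mu> lam) - (\<phi> \<nu> (?x + iX i) - \<phi> \<nu> ?x) + ?R] (mod 4)"
    unfolding kappa_coord_def quad_form_half_dot_add_basis[OF i] primeX_add_basis[OF finite_I i]
      sum_add_basis[OF finite_I i]
    by (simp add: algebra_simps)
  also have "[(\<phi> (\<lambda>k. \<mu> k + basis i k) lam - \<phi> \<mu> lam) - (\<phi> \<nu> (?x + iX i) - \<phi> \<nu> ?x) + ?R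
      = \<phi> (basis i) lam - \<phi> \<nu> (iX i) + ?R] (mod 4)"
  proof -
    have "[\<phi> (\<lambda>k. \<mu> k + basis i k) lam - \<phi> \<mu> lam = \<phi> (basis i) lam] (mod 4)"
      using phi_add_left[OF \<mu> ZI_basis[OF i], of lam] by (simp add: cong_iff_dvd_diff algebra_simps)
    moreover have "[\<phi> \<nu> (?x + iX i) - \<phi> \<nu> ?x = \<phi> \<nu> (iX i)] (mod 4)"
      using phi_add_right[OF \<nu> ZI_basis[OF i], of ?x]
      by (simp add: primeX_basis[OF finite_I i] cong_iff_dvd_diff algebra_simps)
    ultimately show ?thesis by (intro cong_add cong_diff cong_refl)
  qed
  also have "[\<phi> (basis i) lam - \<phi> \<nu> (iX i) + ?R
      = \<phi> (basis i) ?\<zeta> - ?\<nu>i + ?p + ?R] (mod 4)"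
    by (intro cong_add cong_refl phi_basis_minus_phi_iX[OF i \<nu>])
  also have "[\<phi> (basis i) ?\<zeta> - ?\<nu>i + ?p + ?R
      = kappa_coord lam lam' \<nu> \<mu> + \<phi> (basis i) ?\<zeta> + 2 * dd dot i
        + pairing (tildeY dot iY i) (?\<zeta> + ?x) + ?p] (mod 4)"
    by (simp add: pairing_add pairing_diff pairing_tildeY_primeX[OF i] algebra_simps)
  finally show ?thesis .
qed

lemma kappa_coord_zero: "[kappa_coord lam lam' (\<lambda>k. 0) (\<lambda>k. 0) = 0] (mod 4)"
  using cong_diff[OF phi_zero_left[of lam] phi_zero_left[of "primeX I iX (\<lambda>k. 0) - lam'"]]
  by (simp add: kappa_coord_def quad_form_def)

end

theorem mainTheorem19:
  fixes I I1 :: "'i set" and dot :: "'i \<Rightarrow> 'i \<Rightarrow> int"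
    and iY iX :: "'i \<Rightarrow> int ^ 'n::finite"
    and \<phi> :: "('i \<Rightarrow> int) \<Rightarrow> int ^ 'n \<Rightarrow> int"
    and lam lam' :: "int ^ 'n"
  assumes "cartan_datum I I1 dot"
    and "root_datum I dot iY iX"
    and "X_regular I iX"
    and "enhancer I I1 dot iX \<phi>"
    and "lam \<in> Xplus I iY" and "lam' \<in> Xplus I iY"
  shows "\<exists>\<kappa> :: int ^ 'n \<Rightarrow> int ^ 'n \<Rightarrow> int.
    (\<forall>i\<in>I. \<forall>\<nu>\<in>NI I. \<forall>\<mu>\<in>NI I.
       let \<zeta> = lam - primeX I iX \<nu>; \<zeta>' = primeX I iX \<mu> - lam' in
       \<kappa> (\<zeta> - iX i) \<zeta>' mod 4 = (\<kappa> \<zeta> \<zeta>' - \<phi> (basis i) \<zeta>') mod 4 \<and>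
       \<kappa> \<zeta> (\<zeta>' + iX i) mod 4
         = (\<kappa> \<zeta> \<zeta>' + \<phi> (basis i) \<zeta> + 2 * dd dot i + pairing (tildeY dot iY i) (\<zeta> + \<zeta>')
            + 2 * parZ I I1 \<nu> * par I1 i) mod 4) \<and>
    \<kappa> lam (- lam') mod 4 = 0"
proof -
  interpret enhanced_root_datum I I1 dot iY iX \<phi>
    using assms(1,2,4) by unfold_locales
  define coords where "coords = inv_into (ZI I) (primeX I iX)"
  have coords: "coords (primeX I iX \<nu>) = \<nu>" if "\<nu> \<in> ZI I" for \<nu>
    using inj_on_primeX[OF assms(3)] that by (simp add: coords_def)
  define \<kappa> where "\<kappa> \<zeta> \<zeta>' = kappa_coord lam lam' (coords (lam - \<zeta>)) (coords (\<zeta>' + lam'))" for \<zeta> \<zeta>'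
  show ?thesis
  proof (intro exI[of _ \<kappa>] conjI ballI)
    fix i \<nu> \<mu> assume i: "i \<in> I" and "\<nu> \<in> NI I" "\<mu> \<in> NI I"
    then have \<nu>: "\<nu> \<in> ZI I" and \<mu>: "\<mu> \<in> ZI I" by (auto simp: NI_def)
    have "lam - (lam - primeX I iX \<nu> - iX i) = primeX I iX (\<lambda>k. \<nu> k + basis i k)"
      and "primeX I iX \<mu> - lam' + iX i + lam' = primeX I iX (\<lambda>k. \<mu> k + basis i k)"
      by (simp_all add: primeX_add_basis[OF finite_I i])
    with kappa_coord_add_basis_left[OF i \<nu>] kappa_coord_add_basis_right[OF i \<nu> \<mu>]
    show "let \<zeta> = lam - primeX I iX \<nu>; \<zeta>' = primeX I iX \<mu> - lam' in
       \<kappa> (\<zeta> - iX i) \<zeta>' mod 4 = (\<kappa> \<zeta> \<zeta>' - \<phi> (basis i) \<zeta>') mod 4 \<and>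
       \<kappa> \<zeta> (\<zeta>' + iX i) mod 4
         = (\<kappa> \<zeta> \<zeta>' + \<phi> (basis i) \<zeta> + 2 * dd dot i + pairing (tildeY dot iY i) (\<zeta> + \<zeta>')
            + 2 * parZ I I1 \<nu> * par I1 i) mod 4"
      by (simp add: Let_def \<kappa>_def coords \<nu> \<mu> ZI_add ZI_basis i cong_def)
  next
    show "\<kappa> lam (- lam') mod 4 = 0"
      using kappa_coord_zero coords[OF ZI_zero] by (simp add: \<kappa>_def primeX_zero cong_def)
  qed
qed

end
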